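(* Call a nonnegative integer $t$ totally balanced if its binary expansion (with the convention that $0$ has the empty expansion) has even length $2k$ for some $k \geq 0$, contains exactly $k$ ones and $k$ zeros, and, reading from the most significant bit, every prefix contains no more zeros than ones. For a nonnegative integer $t = \sum_{j \geq 0} e_j 2^j$ with $e_j \in \{0,1\}$, let $v_t = \sum_{j \geq 0} e_j 2^{-j-1}$ (the base-2 van der Corput value). Write each $v_t$, for $t$ totally balanced, as a fraction in lowest terms. Then every such denominator is a power of $4$, and for each $k \geq 0$ the denominator $4^k$ occurs for exactly $$C_k = \frac{1}{k+1}\binom{2k}{k}$$ totally balanced integers $t$ (namely those whose binary expansion has length $2k$).
   Context: $C_k$ denotes the $k$-th Catalan number. *)

theory Defs
  imports Complex_Main
begin

text \<open>Binary expansion, most significant bit first; 0 has the empty expansion.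
  True stands for the digit 1, False for the digit 0.\<close>
fun bin_digits :: "nat \<Rightarrow> bool list" where
  "bin_digits n = (if n = 0 then [] else bin_digits (n div 2) @ [odd n])"

declare bin_digits.simps [simp del]

definition count_ones :: "bool list \<Rightarrow> nat" where
  "count_ones xs = length (filter (\<lambda>b. b) xs)"

definition count_zeros :: "bool list \<Rightarrow> nat" where
  "count_zeros xs = length (filter (\<lambda>b. \<not> b) xs)"

definition totally_balanced :: "nat \<Rightarrow> bool" where
  "totally_balanced t \<longleftrightarrow>
     (\<exists>k. length (bin_digits t) = 2 * k \<and>
          count_ones (bin_digits t) = k \<and> count_zeros (bin_digits t) = k) \<and>
     (\<forall>i \<le> length (bin_digits t).
          count_zeros (take i (bin_digits t)) \<le> count_ones (take i (bin_digits t)))"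

definition vdc :: "nat \<Rightarrow> rat" where
  "vdc t = (\<Sum>j < length (bin_digits t). of_nat ((t div 2 ^ j) mod 2) / 2 ^ (j + 1))"

definition denom :: "rat \<Rightarrow> int" where
  "denom q = snd (quotient_of q)"

end

theory Submission
  imports Defs "HOL-Library.Log_Nat"
begin

text \<open>For \<open>t > 0\<close> with \<open>L\<close> binary digits, \<open>2^L * vdc t\<close> is the integer whose binary
  digits are those of \<open>t\<close> in reverse order. Its units digit is the leading 1 of \<open>t\<close>, so it is
  odd and \<open>vdc t\<close> has denominator exactly \<open>2^L\<close>; a totally balanced \<open>t\<close> of length \<open>2k\<close>
  thus has denominator \<open>4^k\<close>. The binary expansions of totally balanced numbers are exactly
  the ballot words with \<open>k\<close> ones and \<open>k\<close> zeros (such words start with a 1). Splitting off the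
  last letter shows that there are \<open>C(a+b,b) - C(a+b,a+1)\<close> ballot words with \<open>a \<ge> b\<close> ones
  and \<open>b\<close> zeros, which for \<open>a = b = k\<close> is the Catalan number \<open>C(2k,k)/(k+1)\<close>.\<close>

lemma bin_digits_0 [simp]: "bin_digits 0 = []"
  by (simp add: bin_digits.simps)

lemma bin_digits_nonzero: "n > 0 \<Longrightarrow> bin_digits n = bin_digits (n div 2) @ [odd n]"
  by (simp add: bin_digits.simps)

lemma length_bin_digits: "length (bin_digits n) = floorlog 2 n"
proof (induction n rule: less_induct)
  case (less n)
  show ?case
  proof (cases "n = 0")
    case True
    then show ?thesis by (simp add: floorlog_def)
  next
    case False
    then show ?thesis
      using less[of "n div 2"] by (simp add: bin_digits_nonzero compute_floorlog[of 2 n])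
  qed
qed

lemma bin_digits_top_bit:
  assumes "n > 0"
  shows "n div 2 ^ (length (bin_digits n) - 1) = 1"
proof -
  obtain L where L: "floorlog 2 n = Suc L"
    using assms by (simp add: floorlog_def)
  have "2 ^ L \<le> n \<and> n < 2 * 2 ^ L"
    using floorlog_bounds[OF assms, of 2] L by simp
  then show ?thesis
    unfolding length_bin_digits L by (intro div_nat_eqI) simp_all
qed

lemma hd_bin_digits: "n > 0 \<Longrightarrow> hd (bin_digits n)"
proof (induction n rule: less_induct)
  case (less n)
  show ?case
  proof (cases "n div 2 = 0")
    case True
    then have "n = 1" using less.prems by simp
    then show ?thesis by (simp add: bin_digits_nonzero)
  next
    case False
    then have "bin_digits (n div 2) \<noteq> []"
      by (simp add: bin_digits_nonzero)
    moreover have "hd (bin_digits (n div 2))"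
      using less False by simp
    ultimately show ?thesis
      using less.prems by (simp add: bin_digits_nonzero[of n])
  qed
qed

lemma inj_bin_digits: "inj bin_digits"
proof -
  have "bin_digits m = bin_digits n \<Longrightarrow> m = n" for m n
  proof (induction m arbitrary: n rule: less_induct)
    case (less m)
    show ?case
    proof (cases "m = 0 \<or> n = 0")
      case True
      then show ?thesis
        using less.prems bin_digits_nonzero by (metis bin_digits_0 gr0I snoc_eq_iff_butlast)
    next
      case False
      then have "bin_digits (m div 2) = bin_digits (n div 2)" "odd m = odd n"
        using less.prems by (simp_all add: bin_digits_nonzero)
      then have "m div 2 = n div 2" "m mod 2 = n mod 2"
        using less.IH[of "m div 2"] False by (simp_all add: odd_iff_mod_2_eq_one) presburger
      then show ?thesis
        by (metis div_mult_mod_eq)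
    qed
  qed
  then show ?thesis by (rule injI)
qed

lemma range_bin_digits: "range bin_digits = {xs. xs = [] \<or> hd xs}"
proof (intro set_eqI iffI)
  fix xs assume "xs \<in> range bin_digits"
  then obtain n where "xs = bin_digits n" by blast
  then show "xs \<in> {xs. xs = [] \<or> hd xs}"
    using hd_bin_digits by (cases "n = 0") auto
next
  fix xs :: "bool list" assume "xs \<in> {xs. xs = [] \<or> hd xs}"
  then show "xs \<in> range bin_digits"
  proof (induction xs rule: rev_induct)
    case Nil
    show ?case by (metis bin_digits_0 rangeI)
  next
    case (snoc x xs)
    show ?case
    proof (cases "xs = []")
      case True
      then have "bin_digits 1 = xs @ [x]"
        using snoc.prems by (simp add: bin_digits_nonzero)
      then show ?thesis by (metis rangeI)
    next
      case False
      then obtain m where m: "bin_digits m = xs"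
        using snoc by auto
      then have "m > 0" using False by (cases "m = 0") auto
      then have "bin_digits (2 * m + of_bool x) = xs @ [x]"
        using m by (simp add: bin_digits_nonzero)
      then show ?thesis by (metis rangeI)
    qed
  qed
qed

definition bit_reverse :: "nat \<Rightarrow> nat" where
  "bit_reverse n =
     (\<Sum>j < length (bin_digits n). (n div 2 ^ j) mod 2 * 2 ^ (length (bin_digits n) - Suc j))"

lemma vdc_eq_bit_reverse: "vdc t = of_nat (bit_reverse t) / 2 ^ length (bin_digits t)"
proof -
  define L where "L = length (bin_digits t)"
  have "(2::rat) ^ L = 2 ^ (L - Suc j) * 2 ^ (j + 1)" if "j < L" for j
    using that by (simp only: power_add[symmetric]) simp
  then have "vdc t = (\<Sum>j < L. of_nat ((t div 2 ^ j) mod 2 * 2 ^ (L - Suc j)) / 2 ^ L)"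
    unfolding vdc_def L_def[symmetric] by (intro sum.cong) simp_all
  then show ?thesis
    by (simp add: bit_reverse_def L_def flip: sum_divide_distrib)
qed

lemma odd_bit_reverse:
  assumes "n > 0"
  shows "odd (bit_reverse n)"
proof -
  obtain L where L: "length (bin_digits n) = Suc L"
    using assms by (simp add: bin_digits_nonzero)
  have "bit_reverse n = (\<Sum>j < L. (n div 2 ^ j) mod 2 * 2 ^ (Suc L - Suc j)) + (n div 2 ^ L) mod 2"
    by (simp add: bit_reverse_def L)
  moreover have "even (\<Sum>j < L. (n div 2 ^ j) mod 2 * 2 ^ (Suc L - Suc j))"
    by (intro dvd_sum) (simp add: Suc_diff_Suc)
  moreover have "n div 2 ^ L = 1"
    using bin_digits_top_bit[OF assms] L by simp
  ultimately show ?thesis by simp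
qed

lemma denom_odd_div_two_power:
  assumes "odd N"
  shows "denom (of_int N / 2 ^ L) = 2 ^ L"
proof -
  have "coprime N (2 ^ L)"
    using assms by (simp add: coprime_commute)
  moreover have "of_int N / 2 ^ L = Fract N (2 ^ L)"
    by (simp add: Fract_of_int_quotient)
  ultimately show ?thesis
    by (simp add: denom_def quotient_of_Fract)
qed

lemma denom_vdc: "denom (vdc t) = 2 ^ length (bin_digits t)"
proof (cases "t = 0")
  case True
  then show ?thesis by (simp add: vdc_def denom_def)
next
  case False
  then show ?thesis
    using denom_odd_div_two_power[of "int (bit_reverse t)"] odd_bit_reverse[of t]
    by (simp add: vdc_eq_bit_reverse)
qed

lemma count_ones_Nil [simp]: "count_ones [] = 0"
  by (simp add: count_ones_def)

lemma count_zeros_Nil [simp]: "count_zeros [] = 0"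
  by (simp add: count_zeros_def)

lemma count_ones_snoc [simp]: "count_ones (xs @ [x]) = count_ones xs + of_bool x"
  by (simp add: count_ones_def)

lemma count_zeros_snoc [simp]: "count_zeros (xs @ [x]) = count_zeros xs + of_bool (\<not> x)"
  by (simp add: count_zeros_def)

lemma length_eq_count_ones_plus_count_zeros: "length xs = count_ones xs + count_zeros xs"
  unfolding count_ones_def count_zeros_def by (simp add: sum_length_filter_compl)

definition ballot_sequence :: "bool list \<Rightarrow> bool" where
  "ballot_sequence xs \<longleftrightarrow>
     (\<forall>i \<le> length xs. count_zeros (take i xs) \<le> count_ones (take i xs))"

definition ballot_words :: "nat \<Rightarrow> nat \<Rightarrow> bool list set" where
  "ballot_words a b = {xs. count_ones xs = a \<and> count_zeros xs = b \<and> ballot_sequence xs}"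

lemma ballot_sequence_snoc:
  "ballot_sequence (xs @ [x]) \<longleftrightarrow>
     ballot_sequence xs \<and> count_zeros (xs @ [x]) \<le> count_ones (xs @ [x])"
  by (auto simp: ballot_sequence_def le_Suc_eq)

lemma ballot_sequence_hd:
  assumes "ballot_sequence xs"
  shows "xs = [] \<or> hd xs"
proof (cases xs)
  case (Cons x ys)
  then have "count_zeros [x] \<le> count_ones [x]"
    using assms[unfolded ballot_sequence_def, rule_format, of 1] by simp
  with Cons show ?thesis
    by (cases x) (simp_all add: count_ones_def count_zeros_def)
qed simp

lemma finite_ballot_words: "finite (ballot_words a b)"
proof (rule finite_subset)
  show "ballot_words a b \<subseteq> {xs. set xs \<subseteq> UNIV \<and> length xs = a + b}"
    unfolding ballot_words_def using length_eq_count_ones_plus_count_zeros by auto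
qed (use finite_lists_length_eq[of "UNIV :: bool set" "a + b"] in simp)

lemma ballot_words_empty: "a < b \<Longrightarrow> ballot_words a b = {}"
  by (auto simp: ballot_words_def ballot_sequence_def dest: spec[of _ "length _"])

lemma ballot_words_0: "ballot_words a 0 = {replicate a True}"
proof (intro set_eqI iffI)
  fix xs assume xs: "xs \<in> ballot_words a 0"
  then have "\<forall>x \<in> set xs. x = True"
    by (auto simp: ballot_words_def count_zeros_def filter_empty_conv)
  then have "xs = replicate (length xs) True"
    by (simp only: replicate_length_same)
  moreover have "length xs = a"
    using xs length_eq_count_ones_plus_count_zeros[of xs] by (simp add: ballot_words_def)
  ultimately show "xs \<in> {replicate a True}"
    by simp
qed (auto simp: ballot_words_def ballot_sequence_def count_ones_def count_zeros_def)

lemma ballot_words_Suc_Suc: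
  assumes "b \<le> a"
  shows "ballot_words (Suc a) (Suc b) =
    (\<lambda>xs. xs @ [True]) ` ballot_words a (Suc b) \<union> (\<lambda>xs. xs @ [False]) ` ballot_words (Suc a) b"
proof (intro set_eqI iffI)
  fix xs assume xs: "xs \<in> ballot_words (Suc a) (Suc b)"
  then have "xs \<noteq> []"
    by (auto simp: ballot_words_def)
  then obtain ys y where "xs = ys @ [y]"
    by (metis rev_exhaust)
  with xs show "xs \<in> (\<lambda>xs. xs @ [True]) ` ballot_words a (Suc b) \<union> (\<lambda>xs. xs @ [False]) ` ballot_words (Suc a) b"
    by (cases y) (auto simp: ballot_words_def ballot_sequence_snoc)
next
  fix xs assume "xs \<in> (\<lambda>xs. xs @ [True]) ` ballot_words a (Suc b) \<union> (\<lambda>xs. xs @ [False]) ` ballot_words (Suc a) b"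
  then show "xs \<in> ballot_words (Suc a) (Suc b)"
    using assms by (auto simp: ballot_words_def ballot_sequence_snoc)
qed

text \<open>The subtracted term is the usual \<open>C(a+b,b-1)\<close>, written so that it vanishes for \<open>b = 0\<close>.\<close>

lemma card_ballot_words:
  assumes "b \<le> a"
  shows "int (card (ballot_words a b)) = int ((a + b) choose b) - int ((a + b) choose Suc a)"
  using assms
proof (induction "a + b" arbitrary: a b rule: less_induct)
  case less
  show ?case
  proof (cases b)
    case 0
    then show ?thesis by (simp add: ballot_words_0)
  next
    case (Suc b')
    then obtain a' where a: "a = Suc a'" and "b' \<le> a'"
      using less.prems by (cases a) auto
    have first: "int (card (ballot_words a' (Suc b'))) =
        int ((a' + Suc b') choose Suc b') - int ((a' + Suc b') choose Suc a')"
    proof (cases "Suc b' \<le> a'")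
      case True
      then show ?thesis using less.hyps[of a' "Suc b'"] a Suc by simp
    next
      case False
      then have "b' = a'" using \<open>b' \<le> a'\<close> by simp
      then show ?thesis by (simp add: ballot_words_empty)
    qed
    have second: "int (card (ballot_words (Suc a') b')) =
        int ((Suc a' + b') choose b') - int ((Suc a' + b') choose Suc (Suc a'))"
      using less.hyps[of "Suc a'" b'] a Suc \<open>b' \<le> a'\<close> by simp
    have "card (ballot_words a b) = card (ballot_words a' (Suc b')) + card (ballot_words (Suc a') b')"
      unfolding a Suc ballot_words_Suc_Suc[OF \<open>b' \<le> a'\<close>]
      by (subst card_Un_disjoint) (auto simp: finite_ballot_words card_image inj_on_def)
    then show ?thesis
      using first second by (simp add: a Suc)
  qed
qed

lemma Suc_times_central_binomial_Suc: "Suc k * ((2 * k) choose Suc k) = k * ((2 * k) choose k)"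
proof (cases k)
  case (Suc m)
  then show ?thesis
    using Suc_times_binomial_add[of k m] by (simp add: mult_2)
qed simp

lemma Suc_times_card_ballot_words_diag: "Suc k * card (ballot_words k k) = (2 * k) choose k"
proof -
  have "card (ballot_words k k) + ((2 * k) choose Suc k) = (2 * k) choose k"
    using card_ballot_words[of k k] by (simp add: mult_2)
  then have "Suc k * card (ballot_words k k) + Suc k * ((2 * k) choose Suc k) = Suc k * ((2 * k) choose k)"
    by (metis add_mult_distrib2)
  then show ?thesis
    unfolding Suc_times_central_binomial_Suc by simp
qed

lemma totally_balanced_of_length:
  "{t. totally_balanced t \<and> length (bin_digits t) = 2 * k} = bin_digits -` ballot_words k k"
  using length_eq_count_ones_plus_count_zeros
  by (fastforce simp: totally_balanced_def ballot_words_def ballot_sequence_def)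

lemma card_totally_balanced_of_length:
  "card {t. totally_balanced t \<and> length (bin_digits t) = 2 * k} = card (ballot_words k k)"
  unfolding totally_balanced_of_length
  by (rule card_vimage_inj[OF inj_bin_digits])
    (auto simp: range_bin_digits ballot_words_def dest: ballot_sequence_hd)

theorem proposition1:
  shows "(\<forall>t. totally_balanced t \<longrightarrow> (\<exists>k::nat. denom (vdc t) = 4 ^ k)) \<and>
         (\<forall>k::nat.
            {t. totally_balanced t \<and> denom (vdc t) = 4 ^ k}
              = {t. totally_balanced t \<and> length (bin_digits t) = 2 * k} \<and>
            real (card {t. totally_balanced t \<and> denom (vdc t) = 4 ^ k})
              = (1 / (real k + 1)) * real ((2 * k) choose k))"
proof -
  have "(4::int) ^ k = 2 ^ (2 * k)" for k
    by (simp add: power_mult)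
  then have denom_eq_4_power: "denom (vdc t) = 4 ^ k \<longleftrightarrow> length (bin_digits t) = 2 * k" for t k
    by (simp add: denom_vdc)
  have "\<exists>k. denom (vdc t) = 4 ^ k" if "totally_balanced t" for t
    using that unfolding denom_eq_4_power totally_balanced_def by blast
  moreover have "real (card {t. totally_balanced t \<and> length (bin_digits t) = 2 * k})
      = (1 / (real k + 1)) * real ((2 * k) choose k)" for k
  proof -
    have "real (Suc k * card (ballot_words k k)) = real ((2 * k) choose k)"
      by (simp only: Suc_times_card_ballot_words_diag)
    then show ?thesis
      unfolding card_totally_balanced_of_length by (simp add: field_simps)
  qed
  ultimately show ?thesis
    unfolding denom_eq_4_power by blast
qed

end
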